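(* Let $\mathcal Y,\mathcal X$ be finite sets, $\mathcal A$ an action set, $L:\mathcal Y\times\mathcal A\to\mathbb R$ a loss function, and $\beta,\epsilon\ge0$. Let $\{(Y_t,X_t)\}_{t}$ be a stationary process with values in $\mathcal Y\times\mathcal X$, and for each integer $\delta\ge0$ let $(\tilde Y_0,\tilde X_{-\delta})$ be a pair of random variables in $\mathcal Y\times\mathcal X$ (the training data) whose conditional distributions $P_{\tilde Y_0\mid\tilde X_{-\delta}=x}$ are defined for all $x$ with $P_{X_{t-\delta}}(x)>0$. Suppose $Y_t\overset{\epsilon}{\leftrightarrow}X_{t-\mu}\overset{\epsilon}{\leftrightarrow}X_{t-\mu-\nu}$ is an $\epsilon$-Markov chain for all integers $\mu,\nu\ge0$, and that for every integer $\delta\ge0$ $$\sum_{x\in\mathcal X}P_{X_{t-\delta}}(x)\sum_{y\in\mathcal Y}\big(P_{Y_t\mid X_{t-\delta}=x}(y)-P_{\tilde Y_0\mid\tilde X_{-\delta}=x}(y)\big)^2\le\beta^2 .$$ Then for all integers $0\le\delta_1\le\delta_2$, $$H_L\big(P_{Y_t\mid X_{t-\delta_1}};P_{\tilde Y_0\mid\tilde X_{-\delta_1}}\,\big|\,P_{X_{t-\delta_1}}\big)\le H_L\big(P_{Y_t\mid X_{t-\delta_2}};P_{\tilde Y_0\mid\tilde X_{-\delta_2}}\,\big|\,P_{X_{t-\delta_2}}\big)+O(\max\{\epsilon,\beta\}).$$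
   Context: For a distribution $P$ on $\mathcal Y$, a Bayes action $a_P$ is a minimizer of $a\mapsto\mathbb E_{Y\sim P}[L(Y,a)]$ (assumed to exist). The $L$-conditional cross entropy is $$H_L\big(P_{Y_t\mid X_{t-\delta}};P_{\tilde Y_0\mid\tilde X_{-\delta}}\,\big|\,P_{X_{t-\delta}}\big)=\sum_{x\in\mathcal X}P_{X_{t-\delta}}(x)\,\mathbb E_{Y\sim P_{Y_t\mid X_{t-\delta}=x}}\big[L\big(Y,a_{P_{\tilde Y_0\mid\tilde X_{-\delta}=x}}\big)\big].$$ The Shannon conditional mutual information is $I_{\log}(Y;Z\mid X)=D_{\log}(P_{Y,X,Z}\|P_{Y\mid X}P_{Z\mid X}P_X)$ with $D_{\log}$ the KL divergence; $Y\overset{\epsilon}{\leftrightarrow}X\overset{\epsilon}{\leftrightarrow}Z$ ($\epsilon$-Markov chain) means $I_{\log}(Y;Z\mid X)\le\epsilon^2$. $O(\cdot)$ is the Landau symbol (bounded by a constant multiple). *)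

theory Defs
  imports "HOL-Probability.Probability"
begin

definition prob_vec :: "('y::finite \<Rightarrow> real) \<Rightarrow> bool" where
  "prob_vec p \<longleftrightarrow> (\<forall>y. 0 \<le> p y) \<and> (\<Sum>y\<in>UNIV. p y) = 1"

definition exp_loss :: "('y::finite \<Rightarrow> 'a \<Rightarrow> real) \<Rightarrow> ('y \<Rightarrow> real) \<Rightarrow> 'a \<Rightarrow> real" where
  "exp_loss L p a = (\<Sum>y\<in>UNIV. p y * L y a)"

definition is_bayes_selector :: "('y::finite \<Rightarrow> 'a \<Rightarrow> real) \<Rightarrow> (('y \<Rightarrow> real) \<Rightarrow> 'a) \<Rightarrow> bool" where
  "is_bayes_selector L act \<longleftrightarrow>
     (\<forall>p. prob_vec p \<longrightarrow> (\<forall>b. exp_loss L p (act p) \<le> exp_loss L p b))"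

definition cond_cross_entropy_L ::
  "('y::finite \<Rightarrow> 'a \<Rightarrow> real) \<Rightarrow> (('y \<Rightarrow> real) \<Rightarrow> 'a) \<Rightarrow> ('x::finite \<Rightarrow> real)
    \<Rightarrow> ('x \<Rightarrow> 'y \<Rightarrow> real) \<Rightarrow> ('x \<Rightarrow> 'y \<Rightarrow> real) \<Rightarrow> real" where
  "cond_cross_entropy_L L act PX PYgX QYgX =
     (\<Sum>x\<in>UNIV. PX x * exp_loss L (PYgX x) (act (QYgX x)))"

definition pX :: "'w measure \<Rightarrow> (int \<Rightarrow> 'w \<Rightarrow> 'x) \<Rightarrow> int \<Rightarrow> 'x \<Rightarrow> real" where
  "pX M X s x = measure M {\<omega>\<in>space M. X s \<omega> = x}"

definition pYX :: "'w measure \<Rightarrow> (int \<Rightarrow> 'w \<Rightarrow> 'y) \<Rightarrow> (int \<Rightarrow> 'w \<Rightarrow> 'x) \<Rightarrow> int \<Rightarrow> int \<Rightarrow> 'y \<Rightarrow> 'x \<Rightarrow> real" where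
  "pYX M Y X t s y x = measure M {\<omega>\<in>space M. Y t \<omega> = y \<and> X s \<omega> = x}"

definition pYgX :: "'w measure \<Rightarrow> (int \<Rightarrow> 'w \<Rightarrow> 'y) \<Rightarrow> (int \<Rightarrow> 'w \<Rightarrow> 'x) \<Rightarrow> int \<Rightarrow> int \<Rightarrow> 'x \<Rightarrow> 'y \<Rightarrow> real" where
  "pYgX M Y X t s x y = pYX M Y X t s y x / pX M X s x"

text \<open>Training data (Y~_0, X~_{-delta}) as a joint pmf; its marginal and conditional.\<close>
definition train_pX :: "('y::finite \<times> 'x) pmf \<Rightarrow> 'x \<Rightarrow> real" where
  "train_pX T x = (\<Sum>y\<in>UNIV. pmf T (y, x))"

definition train_pYgX :: "('y::finite \<times> 'x) pmf \<Rightarrow> 'x \<Rightarrow> 'y \<Rightarrow> real" where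
  "train_pYgX T x y = pmf T (y, x) / train_pX T x"

text \<open>Shannon conditional mutual information I(A;C|B) = D(P_{A,B,C} || P_{A|B} P_{C|B} P_B)
  (natural logarithm), for finite-valued random variables on M.\<close>
definition cond_mutual_info ::
  "'w measure \<Rightarrow> ('w \<Rightarrow> 'a::finite) \<Rightarrow> ('w \<Rightarrow> 'b::finite) \<Rightarrow> ('w \<Rightarrow> 'c::finite) \<Rightarrow> real" where
  "cond_mutual_info M A B C =
     (\<Sum>a\<in>UNIV. \<Sum>b\<in>UNIV. \<Sum>c\<in>UNIV.
        let pabc = measure M {\<omega>\<in>space M. A \<omega> = a \<and> B \<omega> = b \<and> C \<omega> = c};
            pab = measure M {\<omega>\<in>space M. A \<omega> = a \<and> B \<omega> = b};
            pbc = measure M {\<omega>\<in>space M. B \<omega> = b \<and> C \<omega> = c};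
            pb = measure M {\<omega>\<in>space M. B \<omega> = b}
        in if pabc = 0 then 0 else pabc * ln (pabc / (pab * pbc / pb)))"

definition stationary :: "'w measure \<Rightarrow> (int \<Rightarrow> 'w \<Rightarrow> 'y) \<Rightarrow> (int \<Rightarrow> 'w \<Rightarrow> 'x) \<Rightarrow> bool" where
  "stationary M Y X \<longleftrightarrow>
    (\<forall>(n::nat) (ts::nat \<Rightarrow> int) (s::int) (v::nat \<Rightarrow> 'y \<times> 'x).
       measure M {\<omega>\<in>space M. \<forall>i<n. (Y (ts i) \<omega>, X (ts i) \<omega>) = v i}
     = measure M {\<omega>\<in>space M. \<forall>i<n. (Y (ts i + s) \<omega>, X (ts i + s) \<omega>) = v i})"

end

theory Submission
  imports Defs
begin

text \<open>
  Let p be the joint law of (Y_t, X_{t-\<delta>1}, X_{t-\<delta>2}) and r = P(Y, X_{t-\<delta>1}) P(X_{t-\<delta>2} | X_{t-\<delta>1})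
  its Markov approximation. The conditional mutual information is the KL divergence from p to r,
  so |p - r|_1 \<le> 2\<epsilon> by a Pinsker-type inequality. For each value b of X_{t-\<delta>1}, the action
  computed from the training conditional Q_b is Bayes-optimal for P(Y_t | b) up to
  2B |P(Y_t | b) - Q_b|_1, hence no worse than the actions used at delay \<delta>2 averaged over
  c ~ P(X_{t-\<delta>2} | b). Summed over b, that average is the \<delta>2-risk computed under r instead of p,
  which costs at most B |p - r|_1; the plug-in errors add up to at most 2B sqrt |Y| \<beta> by
  Cauchy-Schwarz.
\<close>

lemma sum_UNIV_prod3:
  fixes f :: "'a::finite \<times> 'b::finite \<times> 'c::finite \<Rightarrow> 'd::comm_monoid_add"
  shows "(\<Sum>z\<in>UNIV. f z) = (\<Sum>a\<in>UNIV. \<Sum>b\<in>UNIV. \<Sum>c\<in>UNIV. f (a, b, c))"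
  by (simp add: sum.cartesian_product' flip: UNIV_Times_UNIV)

lemma sum_rotate3:
  "(\<Sum>a\<in>A. \<Sum>b\<in>B. \<Sum>c\<in>C. f a b c) = (\<Sum>b\<in>B. \<Sum>c\<in>C. \<Sum>a\<in>A. f a b c)"
proof -
  have "(\<Sum>a\<in>A. \<Sum>b\<in>B. \<Sum>c\<in>C. f a b c) = (\<Sum>b\<in>B. \<Sum>a\<in>A. \<Sum>c\<in>C. f a b c)"
    by (rule sum.swap)
  also have "\<dots> = (\<Sum>b\<in>B. \<Sum>c\<in>C. \<Sum>a\<in>A. f a b c)"
    by (intro sum.cong refl sum.swap)
  finally show ?thesis .
qed

lemma abs_sum_diff_mult_le:
  fixes f :: "'i \<Rightarrow> real"
  assumes "\<forall>i. \<bar>f i\<bar> \<le> B"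
  shows "\<bar>\<Sum>i\<in>I. (p i - q i) * f i\<bar> \<le> B * (\<Sum>i\<in>I. \<bar>p i - q i\<bar>)"
proof -
  have "\<bar>\<Sum>i\<in>I. (p i - q i) * f i\<bar> \<le> (\<Sum>i\<in>I. \<bar>(p i - q i) * f i\<bar>)"
    by (rule sum_abs)
  also have "\<dots> \<le> (\<Sum>i\<in>I. \<bar>p i - q i\<bar> * B)"
    by (intro sum_mono) (simp add: abs_mult assms mult_left_mono)
  also have "\<dots> = B * (\<Sum>i\<in>I. \<bar>p i - q i\<bar>)"
    by (simp add: sum_distrib_left mult.commute)
  finally show ?thesis .
qed

definition kl_div :: "('i::finite \<Rightarrow> real) \<Rightarrow> ('i \<Rightarrow> real) \<Rightarrow> real" where
  "kl_div p r = (\<Sum>i\<in>UNIV. if p i = 0 then 0 else p i * ln (p i / r i))"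

lemma hellinger_term_le_kl_term:
  fixes p r :: real
  assumes "0 \<le> p" "0 \<le> r" "0 < p \<longrightarrow> 0 < r"
  shows "(sqrt p - sqrt r)\<^sup>2 + p - r \<le> (if p = 0 then 0 else p * ln (p / r))"
proof (cases "p = 0")
  case True
  then show ?thesis using assms by (simp add: power2_eq_square)
next
  case False
  with assms have p: "0 < p" and r: "0 < r" by auto
  have "ln (sqrt r / sqrt p) \<le> sqrt r / sqrt p - 1"
    using p r by (intro ln_le_minus_one) simp
  then have "p * ln (sqrt r / sqrt p) \<le> p * (sqrt r / sqrt p - 1)"
    using p by (simp add: mult_left_mono)
  also have "\<dots> = sqrt p * sqrt r - p"
    using p by (simp add: right_diff_distrib real_div_sqrt flip: times_divide_eq_left mult.commute)
  finally have "p * ln (sqrt r / sqrt p) \<le> sqrt p * sqrt r - p" .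
  moreover have "p * ln (p / r) = - 2 * (p * ln (sqrt r / sqrt p))"
    using p r by (simp add: ln_div ln_sqrt algebra_simps)
  moreover have "(sqrt p - sqrt r)\<^sup>2 = p + r - 2 * (sqrt p * sqrt r)"
    using p r by (simp add: power2_diff)
  ultimately show ?thesis
    using False by simp
qed

text \<open>Pinsker's inequality with constant 2 instead of \<open>sqrt 2\<close>, via the Hellinger distance.\<close>
lemma l1_dist_le_kl_div:
  fixes p r :: "'i::finite \<Rightarrow> real"
  assumes p: "prob_vec p" and r: "prob_vec r" and abs_cont: "\<forall>i. 0 < p i \<longrightarrow> 0 < r i"
  shows "(\<Sum>i\<in>UNIV. \<bar>p i - r i\<bar>) \<le> 2 * sqrt (kl_div p r)"
proof -
  have p0: "0 \<le> p i" and r0: "0 \<le> r i" for i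
    using p r by (auto simp: prob_vec_def)
  have "(\<Sum>i\<in>UNIV. (sqrt (p i) - sqrt (r i))\<^sup>2 + p i - r i) \<le> kl_div p r"
    unfolding kl_div_def by (intro sum_mono hellinger_term_le_kl_term) (use p0 r0 abs_cont in auto)
  then have hellinger: "(\<Sum>i\<in>UNIV. (sqrt (p i) - sqrt (r i))\<^sup>2) \<le> kl_div p r"
    using p r by (simp add: prob_vec_def sum.distrib sum_subtractf)
  have kl_nonneg: "0 \<le> kl_div p r"
    by (rule order_trans[OF sum_nonneg hellinger]) simp
  have "(\<Sum>i\<in>UNIV. (sqrt (p i) + sqrt (r i))\<^sup>2) \<le> (\<Sum>i\<in>UNIV. 2 * (p i + r i))"
  proof (intro sum_mono)
    fix i
    have "(sqrt (p i) + sqrt (r i))\<^sup>2 + (sqrt (p i) - sqrt (r i))\<^sup>2 = 2 * (p i + r i)"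
      using p0 r0 by (simp add: power2_sum power2_diff)
    then show "(sqrt (p i) + sqrt (r i))\<^sup>2 \<le> 2 * (p i + r i)"
      using zero_le_power2[of "sqrt (p i) - sqrt (r i)"] by linarith
  qed
  also have "\<dots> = 4"
    using p r by (simp add: prob_vec_def sum.distrib flip: sum_distrib_left)
  finally have sum_sq: "(\<Sum>i\<in>UNIV. (sqrt (p i) + sqrt (r i))\<^sup>2) \<le> 4" .
  have "(\<Sum>i\<in>UNIV. \<bar>p i - r i\<bar>) = (\<Sum>i\<in>UNIV. \<bar>sqrt (p i) - sqrt (r i)\<bar> * \<bar>sqrt (p i) + sqrt (r i)\<bar>)"
  proof (intro sum.cong refl)
    fix i
    have "p i - r i = (sqrt (p i) - sqrt (r i)) * (sqrt (p i) + sqrt (r i))"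
      using p0 r0 by (simp add: algebra_simps)
    then show "\<bar>p i - r i\<bar> = \<bar>sqrt (p i) - sqrt (r i)\<bar> * \<bar>sqrt (p i) + sqrt (r i)\<bar>"
      by (simp add: abs_mult)
  qed
  also have "\<dots> \<le> L2_set (\<lambda>i. sqrt (p i) - sqrt (r i)) UNIV * L2_set (\<lambda>i. sqrt (p i) + sqrt (r i)) UNIV"
    by (rule L2_set_mult_ineq)
  also have "\<dots> \<le> sqrt (kl_div p r) * 2"
    unfolding L2_set_def
    using real_sqrt_le_mono[OF hellinger] real_sqrt_le_mono[OF sum_sq]
    by (intro mult_mono) (auto simp: real_sqrt_four sum_nonneg kl_nonneg)
  finally show ?thesis by simp
qed

lemma weighted_l1_le_l2:
  fixes w :: "'b::finite \<Rightarrow> real" and d :: "'b \<Rightarrow> 'y::finite \<Rightarrow> real"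
  assumes w0: "\<forall>b. 0 \<le> w b" and w1: "(\<Sum>b\<in>UNIV. w b) = 1"
  shows "(\<Sum>b\<in>UNIV. w b * (\<Sum>y\<in>UNIV. \<bar>d b y\<bar>))
           \<le> sqrt CARD('y) * sqrt (\<Sum>b\<in>UNIV. w b * (\<Sum>y\<in>UNIV. (d b y)\<^sup>2))"
proof -
  define S where "S b = (\<Sum>y\<in>UNIV. (d b y)\<^sup>2)" for b
  have S0: "0 \<le> S b" for b
    by (simp add: S_def sum_nonneg)
  have weight_split: "w b * sqrt (S b) = \<bar>sqrt (w b)\<bar> * \<bar>sqrt (w b * S b)\<bar>" for b
  proof -
    have "\<bar>sqrt (w b)\<bar> * \<bar>sqrt (w b * S b)\<bar> = (sqrt (w b) * sqrt (w b)) * sqrt (S b)"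
      using w0 S0 by (simp add: real_sqrt_mult)
    then show ?thesis using w0 by simp
  qed
  have "(\<Sum>y\<in>UNIV. \<bar>d b y\<bar>) \<le> sqrt CARD('y) * sqrt (S b)" for b
    using L2_set_mult_ineq[where f="\<lambda>_. 1" and A=UNIV and g="d b"] by (simp add: L2_set_def S_def)
  then have "(\<Sum>b\<in>UNIV. w b * (\<Sum>y\<in>UNIV. \<bar>d b y\<bar>)) \<le> (\<Sum>b\<in>UNIV. w b * (sqrt CARD('y) * sqrt (S b)))"
    by (intro sum_mono mult_left_mono) (use w0 in auto)
  also have "\<dots> = sqrt CARD('y) * (\<Sum>b\<in>UNIV. \<bar>sqrt (w b)\<bar> * \<bar>sqrt (w b * S b)\<bar>)"
    by (simp add: sum_distrib_left mult.left_commute flip: weight_split)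
  also have "\<dots> \<le> sqrt CARD('y) * (L2_set (\<lambda>b. sqrt (w b)) UNIV * L2_set (\<lambda>b. sqrt (w b * S b)) UNIV)"
    by (intro mult_left_mono L2_set_mult_ineq) simp
  also have "\<dots> = sqrt CARD('y) * sqrt (\<Sum>b\<in>UNIV. w b * S b)"
    using w0 S0 by (simp add: L2_set_def w1)
  finally show ?thesis by (simp add: S_def)
qed

lemma exp_loss_plugin_le:
  fixes L :: "'y::finite \<Rightarrow> 'a \<Rightarrow> real"
  assumes L: "\<forall>y a. \<bar>L y a\<bar> \<le> B" and act: "is_bayes_selector L act" and Q: "prob_vec Q"
  shows "exp_loss L P (act Q) \<le> exp_loss L P a + 2 * B * (\<Sum>y\<in>UNIV. \<bar>P y - Q y\<bar>)"
proof -
  have dev: "\<bar>exp_loss L P b - exp_loss L Q b\<bar> \<le> B * (\<Sum>y\<in>UNIV. \<bar>P y - Q y\<bar>)" for b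
    using abs_sum_diff_mult_le[where f="\<lambda>y. L y b" and I=UNIV and p=P and q=Q] L
    by (simp add: exp_loss_def sum_subtractf left_diff_distrib)
  have "exp_loss L Q (act Q) \<le> exp_loss L Q a"
    using act Q by (simp add: is_bayes_selector_def)
  with dev[of "act Q"] dev[of a] show ?thesis by linarith
qed

lemma plugin_risk_le_mixture_risk:
  fixes L :: "'y::finite \<Rightarrow> 'a \<Rightarrow> real" and P :: "'y \<Rightarrow> real" and w :: "'c::finite \<Rightarrow> real"
  assumes L: "\<forall>y a. \<bar>L y a\<bar> \<le> B" and act: "is_bayes_selector L act"
    and P0: "\<forall>y. 0 \<le> P y" and w0: "\<forall>c. 0 \<le> w c" and w_sum: "sum w UNIV = sum P UNIV"
    and Q: "0 < sum P UNIV \<longrightarrow> prob_vec Q"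
  shows "(\<Sum>y\<in>UNIV. P y * L y (act Q))
           \<le> (\<Sum>c\<in>UNIV. \<Sum>y\<in>UNIV. P y * w c / sum P UNIV * L y (g c))
             + 2 * B * (sum P UNIV * (\<Sum>y\<in>UNIV. \<bar>P y / sum P UNIV - Q y\<bar>))"
proof (cases "sum P UNIV = 0")
  case True
  then have "P y = 0" for y
    using P0 by (simp add: sum_nonneg_eq_0_iff)
  then show ?thesis by simp
next
  case False
  define m where "m = sum P UNIV"
  define dev where "dev = 2 * B * (m * (\<Sum>y\<in>UNIV. \<bar>P y / m - Q y\<bar>))"
  have m: "0 < m"
    using False P0 by (simp add: m_def order_less_le sum_nonneg)
  have risk: "(\<Sum>y\<in>UNIV. P y * L y a) = m * exp_loss L (\<lambda>y. P y / m) a" for a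
    using m by (simp add: exp_loss_def sum_distrib_left)
  have each: "(\<Sum>y\<in>UNIV. P y * L y (act Q)) \<le> (\<Sum>y\<in>UNIV. P y * L y (g c)) + dev" for c
    using mult_left_mono[OF exp_loss_plugin_le[OF L act, of Q "\<lambda>y. P y / m" "g c"], of m] Q m
    unfolding risk dev_def m_def by (simp add: algebra_simps)
  have weights: "(\<Sum>c\<in>UNIV. w c / m) = 1"
    using m w_sum by (simp add: m_def flip: sum_divide_distrib)
  have "(\<Sum>y\<in>UNIV. P y * L y (act Q)) = (\<Sum>c\<in>UNIV. w c / m * (\<Sum>y\<in>UNIV. P y * L y (act Q)))"
    by (simp only: weights mult_1_left flip: sum_distrib_right)
  also have "\<dots> \<le> (\<Sum>c\<in>UNIV. w c / m * ((\<Sum>y\<in>UNIV. P y * L y (g c)) + dev))"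
    using each m w0 by (intro sum_mono mult_left_mono) auto
  also have "\<dots> = (\<Sum>c\<in>UNIV. w c / m * (\<Sum>y\<in>UNIV. P y * L y (g c))) + (\<Sum>c\<in>UNIV. w c / m) * dev"
    by (simp add: distrib_left sum.distrib sum_distrib_right)
  also have "\<dots> = (\<Sum>c\<in>UNIV. \<Sum>y\<in>UNIV. P y * w c / m * L y (g c)) + dev"
    by (simp add: weights sum_distrib_left mult_ac)
  finally show ?thesis
    unfolding dev_def m_def .
qed

text \<open>P(Y, B) P(C | B): the law that (Y, B, C) would have if Y - B - C were a Markov chain.\<close>
definition markov_approx ::
  "('y::finite \<Rightarrow> 'b::finite \<Rightarrow> 'c::finite \<Rightarrow> real) \<Rightarrow> 'y \<Rightarrow> 'b \<Rightarrow> 'c \<Rightarrow> real" where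
  "markov_approx p y b c =
     (\<Sum>c'\<in>UNIV. p y b c') * (\<Sum>y'\<in>UNIV. p y' b c) / (\<Sum>y'\<in>UNIV. \<Sum>c'\<in>UNIV. p y' b c')"

lemma sum_markov_approx:
  "(\<Sum>y\<in>UNIV. \<Sum>c\<in>UNIV. markov_approx p y b c) = (\<Sum>y\<in>UNIV. \<Sum>c\<in>UNIV. p y b c)"
proof -
  define m where "m = (\<Sum>y\<in>UNIV. \<Sum>c\<in>UNIV. p y b c)"
  have "(\<Sum>y\<in>UNIV. \<Sum>c\<in>UNIV. markov_approx p y b c)
          = (\<Sum>y\<in>UNIV. \<Sum>c\<in>UNIV. p y b c) * (\<Sum>c\<in>UNIV. \<Sum>y\<in>UNIV. p y b c) / m"
    by (simp only: markov_approx_def m_def sum_product sum_divide_distrib)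
  also have "\<dots> = m * m / m"
    unfolding m_def by (subst sum.swap) (rule refl)
  finally show ?thesis
    by (simp add: m_def)
qed

lemma markov_approx_pos:
  assumes p0: "\<forall>y b c. 0 \<le> p y b c" and pos: "0 < p y b c"
  shows "0 < markov_approx p y b c"
proof -
  have "p y b c \<le> (\<Sum>c'\<in>UNIV. p y b c')" and "p y b c \<le> (\<Sum>y'\<in>UNIV. p y' b c)"
    by (intro member_le_sum; use p0 in simp)+
  moreover have "(\<Sum>c'\<in>UNIV. p y b c') \<le> (\<Sum>y'\<in>UNIV. \<Sum>c'\<in>UNIV. p y' b c')"
    by (intro member_le_sum) (use p0 in \<open>simp_all add: sum_nonneg\<close>)
  ultimately show ?thesis
    using pos unfolding markov_approx_def by simp
qed

lemma prob_vec_markov_approx: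
  assumes p: "prob_vec (\<lambda>(y, b, c). p y b c)"
  shows "prob_vec (\<lambda>(y, b, c). markov_approx p y b c)"
proof -
  have "0 \<le> markov_approx p y b c" for y b c
    using p by (simp add: prob_vec_def markov_approx_def sum_nonneg)
  moreover have "(\<Sum>y\<in>UNIV. \<Sum>b\<in>UNIV. \<Sum>c\<in>UNIV. markov_approx p y b c)
                   = (\<Sum>y\<in>UNIV. \<Sum>b\<in>UNIV. \<Sum>c\<in>UNIV. p y b c)"
    by (subst (1 2) sum.swap) (simp only: sum_markov_approx)
  ultimately show ?thesis
    using p by (simp add: prob_vec_def sum_UNIV_prod3)
qed

lemma sum_markov_approx_mult_le:
  fixes p F :: "'y::finite \<Rightarrow> 'b::finite \<Rightarrow> 'c::finite \<Rightarrow> real"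
  assumes p: "prob_vec (\<lambda>(y, b, c). p y b c)"
    and kl: "kl_div (\<lambda>(y, b, c). p y b c) (\<lambda>(y, b, c). markov_approx p y b c) \<le> \<epsilon>\<^sup>2"
    and \<epsilon>: "0 \<le> \<epsilon>" and F: "\<forall>y b c. \<bar>F y b c\<bar> \<le> B"
  shows "(\<Sum>y\<in>UNIV. \<Sum>b\<in>UNIV. \<Sum>c\<in>UNIV. markov_approx p y b c * F y b c)
           \<le> (\<Sum>y\<in>UNIV. \<Sum>b\<in>UNIV. \<Sum>c\<in>UNIV. p y b c * F y b c) + 2 * B * \<epsilon>"
proof -
  define r where "r = markov_approx p"
  have p0: "\<forall>y b c. 0 \<le> p y b c"
    using p by (simp add: prob_vec_def)
  have "(\<Sum>y\<in>UNIV. \<Sum>b\<in>UNIV. \<Sum>c\<in>UNIV. \<bar>p y b c - r y b c\<bar>) \<le> 2 * sqrt (\<epsilon>\<^sup>2)"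
    using l1_dist_le_kl_div[OF p prob_vec_markov_approx[OF p]] markov_approx_pos[OF p0]
      real_sqrt_le_mono[OF kl]
    by (simp add: sum_UNIV_prod3 r_def)
  then have l1: "(\<Sum>y\<in>UNIV. \<Sum>b\<in>UNIV. \<Sum>c\<in>UNIV. \<bar>r y b c - p y b c\<bar>) \<le> 2 * \<epsilon>"
    using \<epsilon> by (simp add: abs_minus_commute)
  have "\<bar>\<Sum>y\<in>UNIV. \<Sum>b\<in>UNIV. \<Sum>c\<in>UNIV. (r y b c - p y b c) * F y b c\<bar>
          \<le> B * (\<Sum>y\<in>UNIV. \<Sum>b\<in>UNIV. \<Sum>c\<in>UNIV. \<bar>r y b c - p y b c\<bar>)"
    using abs_sum_diff_mult_le[where I=UNIV and f="\<lambda>(y, b, c). F y b c"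
        and p="\<lambda>(y, b, c). r y b c" and q="\<lambda>(y, b, c). p y b c"] F
    by (simp add: sum_UNIV_prod3)
  also have "\<dots> \<le> B * (2 * \<epsilon>)"
    using l1 F by (intro mult_left_mono) (auto intro: order_trans[OF abs_ge_zero])
  finally show ?thesis
    by (simp add: sum_subtractf left_diff_distrib r_def)
qed

lemma plugin_risk_le_risk_of_approx_markov:
  fixes L :: "'y::finite \<Rightarrow> 'a \<Rightarrow> real" and p :: "'y \<Rightarrow> 'b::finite \<Rightarrow> 'c::finite \<Rightarrow> real"
    and Q :: "'b \<Rightarrow> 'y \<Rightarrow> real" and g :: "'c \<Rightarrow> 'a"
  assumes L: "\<forall>y a. \<bar>L y a\<bar> \<le> B" and act: "is_bayes_selector L act"
    and p: "prob_vec (\<lambda>(y, b, c). p y b c)"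
    and Q: "\<forall>b. 0 < (\<Sum>y\<in>UNIV. \<Sum>c\<in>UNIV. p y b c) \<longrightarrow> prob_vec (Q b)"
    and kl: "kl_div (\<lambda>(y, b, c). p y b c) (\<lambda>(y, b, c). markov_approx p y b c) \<le> \<epsilon>\<^sup>2"
    and \<epsilon>: "0 \<le> \<epsilon>"
  shows "(\<Sum>b\<in>UNIV. \<Sum>y\<in>UNIV. (\<Sum>c\<in>UNIV. p y b c) * L y (act (Q b)))
           \<le> (\<Sum>c\<in>UNIV. \<Sum>y\<in>UNIV. (\<Sum>b\<in>UNIV. p y b c) * L y (g c)) + 2 * B * \<epsilon>
             + 2 * B * (\<Sum>b\<in>UNIV. (\<Sum>y\<in>UNIV. \<Sum>c\<in>UNIV. p y b c)
                 * (\<Sum>y\<in>UNIV. \<bar>(\<Sum>c\<in>UNIV. p y b c) / (\<Sum>y\<in>UNIV. \<Sum>c\<in>UNIV. p y b c) - Q b y\<bar>))"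
    (is "?risk \<le> ?risk' + 2 * B * \<epsilon> + 2 * B * (\<Sum>b\<in>UNIV. ?dev b)")
proof -
  define r where "r = markov_approx p"
  have plugin: "(\<Sum>y\<in>UNIV. (\<Sum>c\<in>UNIV. p y b c) * L y (act (Q b)))
                  \<le> (\<Sum>c\<in>UNIV. \<Sum>y\<in>UNIV. r y b c * L y (g c)) + 2 * B * ?dev b" for b
  proof -
    have "(\<Sum>c\<in>UNIV. \<Sum>y\<in>UNIV. p y b c) = (\<Sum>y\<in>UNIV. \<Sum>c\<in>UNIV. p y b c)"
      by (rule sum.swap)
    then show ?thesis
      using plugin_risk_le_mixture_risk[OF L act, where P="\<lambda>y. \<Sum>c\<in>UNIV. p y b c"
          and w="\<lambda>c. \<Sum>y\<in>UNIV. p y b c" and Q="Q b" and g=g] p Q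
      unfolding r_def markov_approx_def by (simp add: prob_vec_def sum_nonneg)
  qed
  have "(\<Sum>y\<in>UNIV. \<Sum>b\<in>UNIV. \<Sum>c\<in>UNIV. r y b c * L y (g c))
          \<le> (\<Sum>y\<in>UNIV. \<Sum>b\<in>UNIV. \<Sum>c\<in>UNIV. p y b c * L y (g c)) + 2 * B * \<epsilon>"
    unfolding r_def using L by (intro sum_markov_approx_mult_le[OF p kl \<epsilon>]) simp
  moreover have "(\<Sum>y\<in>UNIV. \<Sum>b\<in>UNIV. \<Sum>c\<in>UNIV. r y b c * L y (g c))
                   = (\<Sum>b\<in>UNIV. \<Sum>c\<in>UNIV. \<Sum>y\<in>UNIV. r y b c * L y (g c))"
    by (rule sum_rotate3)
  moreover have "(\<Sum>y\<in>UNIV. \<Sum>b\<in>UNIV. \<Sum>c\<in>UNIV. p y b c * L y (g c))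
                   = (\<Sum>c\<in>UNIV. \<Sum>y\<in>UNIV. \<Sum>b\<in>UNIV. p y b c * L y (g c))"
    by (rule trans[OF sum_rotate3 sum_rotate3])
  ultimately have approx: "(\<Sum>b\<in>UNIV. \<Sum>c\<in>UNIV. \<Sum>y\<in>UNIV. r y b c * L y (g c))
                       \<le> (\<Sum>c\<in>UNIV. \<Sum>y\<in>UNIV. \<Sum>b\<in>UNIV. p y b c * L y (g c)) + 2 * B * \<epsilon>"
    by simp
  have "?risk \<le> (\<Sum>b\<in>UNIV. (\<Sum>c\<in>UNIV. \<Sum>y\<in>UNIV. r y b c * L y (g c)) + 2 * B * ?dev b)"
    by (intro sum_mono plugin)
  also have "\<dots> \<le> (\<Sum>c\<in>UNIV. \<Sum>y\<in>UNIV. \<Sum>b\<in>UNIV. p y b c * L y (g c)) + 2 * B * \<epsilon>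
                    + 2 * B * (\<Sum>b\<in>UNIV. ?dev b)"
    using approx by (simp add: sum.distrib sum_distrib_left)
  also have "(\<Sum>c\<in>UNIV. \<Sum>y\<in>UNIV. \<Sum>b\<in>UNIV. p y b c * L y (g c)) = ?risk'"
    by (simp add: sum_distrib_right)
  finally show ?thesis .
qed

lemma cond_cross_entropy_L_eq_joint_risk:
  fixes J :: "'y::finite \<Rightarrow> 'x::finite \<Rightarrow> real"
  assumes J0: "\<forall>y x. 0 \<le> J y x"
  shows "cond_cross_entropy_L L act (\<lambda>x. \<Sum>y\<in>UNIV. J y x) (\<lambda>x y. J y x / (\<Sum>y\<in>UNIV. J y x)) Q
           = (\<Sum>x\<in>UNIV. \<Sum>y\<in>UNIV. J y x * L y (act (Q x)))"
  unfolding cond_cross_entropy_L_def exp_loss_def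
proof (intro sum.cong refl)
  fix x
  show "(\<Sum>y\<in>UNIV. J y x) * (\<Sum>y\<in>UNIV. J y x / (\<Sum>y\<in>UNIV. J y x) * L y (act (Q x)))
          = (\<Sum>y\<in>UNIV. J y x * L y (act (Q x)))"
  proof (cases "(\<Sum>y\<in>UNIV. J y x) = 0")
    case True
    then have "J y x = 0" for y
      using J0 by (simp add: sum_nonneg_eq_0_iff)
    then show ?thesis by simp
  next
    case False
    then show ?thesis by (simp add: sum_distrib_left)
  qed
qed

lemma prob_vec_train_pYgX:
  assumes "0 < train_pX T x"
  shows "prob_vec (train_pYgX T x)"
proof -
  have "(\<Sum>y\<in>UNIV. train_pYgX T x y) = train_pX T x / train_pX T x"
    unfolding train_pYgX_def train_pX_def by (rule sum_divide_distrib[symmetric])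
  then show ?thesis
    using assms unfolding prob_vec_def
    by (auto simp: train_pYgX_def train_pX_def intro!: divide_nonneg_pos)
qed

definition joint_prob3 ::
  "'w measure \<Rightarrow> ('w \<Rightarrow> 'a) \<Rightarrow> ('w \<Rightarrow> 'b) \<Rightarrow> ('w \<Rightarrow> 'c) \<Rightarrow> 'a \<Rightarrow> 'b \<Rightarrow> 'c \<Rightarrow> real" where
  "joint_prob3 M A B C a b c = measure M {\<omega>\<in>space M. A \<omega> = a \<and> B \<omega> = b \<and> C \<omega> = c}"

lemma (in prob_space) prob_eq_sum_values:
  fixes f :: "'a \<Rightarrow> 'c::finite"
  assumes P: "Measurable.pred M P" and f: "f \<in> measurable M (count_space UNIV)"
  shows "prob {\<omega>\<in>space M. P \<omega>} = (\<Sum>c\<in>UNIV. prob {\<omega>\<in>space M. P \<omega> \<and> f \<omega> = c})"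
proof (rule prob_sum)
  show "{\<omega>\<in>space M. P \<omega> \<and> f \<omega> = c} \<in> events" for c
    using P f by measurable
qed (use P in \<open>auto simp: pred_def\<close>)

context prob_space
begin

lemma pX_eq_sum_pYX:
  fixes Y :: "int \<Rightarrow> 'a \<Rightarrow> 'y::finite"
  assumes "Y t \<in> measurable M (count_space UNIV)" and "X s \<in> measurable M (count_space UNIV)"
  shows "pX M X s x = (\<Sum>y\<in>UNIV. pYX M Y X t s y x)"
  using prob_eq_sum_values[of "\<lambda>\<omega>. X s \<omega> = x" "Y t"] assms
  by (auto simp: pX_def pYX_def conj_commute)

lemma cond_cross_entropy_L_process_eq_joint_risk:
  fixes Y :: "int \<Rightarrow> 'a \<Rightarrow> 'y::finite" and X :: "int \<Rightarrow> 'a \<Rightarrow> 'x::finite"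
  assumes "Y t \<in> measurable M (count_space UNIV)" and "X s \<in> measurable M (count_space UNIV)"
  shows "cond_cross_entropy_L L act (pX M X s) (pYgX M Y X t s) R
           = (\<Sum>x\<in>UNIV. \<Sum>y\<in>UNIV. pYX M Y X t s y x * L y (act (R x)))"
proof -
  have "pX M X s = (\<lambda>x. \<Sum>y\<in>UNIV. pYX M Y X t s y x)"
    and "pYgX M Y X t s = (\<lambda>x y. pYX M Y X t s y x / (\<Sum>y\<in>UNIV. pYX M Y X t s y x))"
    using pX_eq_sum_pYX[where Y=Y and t=t and X=X and s=s, OF assms] by (simp_all add: fun_eq_iff pYgX_def)
  then show ?thesis
    by (simp add: cond_cross_entropy_L_eq_joint_risk pYX_def)
qed

lemma plugin_error_l1_le:
  fixes X :: "int \<Rightarrow> 'a \<Rightarrow> 'x::finite" and Q :: "'x \<Rightarrow> 'y::finite \<Rightarrow> real"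
  assumes X: "X s \<in> measurable M (count_space UNIV)"
    and fit: "(\<Sum>x\<in>UNIV. pX M X s x * (\<Sum>y\<in>UNIV. (pYgX M Y X t s x y - Q x y)\<^sup>2)) \<le> \<beta>\<^sup>2"
    and \<beta>: "0 \<le> \<beta>"
  shows "(\<Sum>x\<in>UNIV. pX M X s x * (\<Sum>y\<in>UNIV. \<bar>pYgX M Y X t s x y - Q x y\<bar>)) \<le> sqrt CARD('y) * \<beta>"
proof -
  have "(\<Sum>x\<in>UNIV. pX M X s x) = 1"
    using prob_eq_sum_values[of "\<lambda>_. True" "X s"] X by (simp add: pX_def prob_space)
  then have "(\<Sum>x\<in>UNIV. pX M X s x * (\<Sum>y\<in>UNIV. \<bar>pYgX M Y X t s x y - Q x y\<bar>))
               \<le> sqrt CARD('y) * sqrt (\<beta>\<^sup>2)"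
    using weighted_l1_le_l2[of "pX M X s" "\<lambda>x y. pYgX M Y X t s x y - Q x y"] real_sqrt_le_mono[OF fit]
    by (simp add: pX_def order_trans mult_left_mono)
  then show ?thesis
    using \<beta> by simp
qed

lemma joint_prob3_marginals:
  fixes A :: "'a \<Rightarrow> 'y::finite" and B :: "'a \<Rightarrow> 'b::finite" and C :: "'a \<Rightarrow> 'c::finite"
  assumes A: "A \<in> measurable M (count_space UNIV)" and B: "B \<in> measurable M (count_space UNIV)"
    and C: "C \<in> measurable M (count_space UNIV)"
  shows "prob {\<omega>\<in>space M. A \<omega> = a \<and> B \<omega> = b} = (\<Sum>c\<in>UNIV. joint_prob3 M A B C a b c)"
    and "prob {\<omega>\<in>space M. A \<omega> = a \<and> C \<omega> = c} = (\<Sum>b\<in>UNIV. joint_prob3 M A B C a b c)"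
    and "prob {\<omega>\<in>space M. B \<omega> = b \<and> C \<omega> = c} = (\<Sum>a\<in>UNIV. joint_prob3 M A B C a b c)"
    and "prob {\<omega>\<in>space M. B \<omega> = b} = (\<Sum>a\<in>UNIV. \<Sum>c\<in>UNIV. joint_prob3 M A B C a b c)"
proof -
  have events: "Measurable.pred M (\<lambda>\<omega>. A \<omega> = a \<and> B \<omega> = b)" "Measurable.pred M (\<lambda>\<omega>. A \<omega> = a \<and> C \<omega> = c)"
    "Measurable.pred M (\<lambda>\<omega>. B \<omega> = b \<and> C \<omega> = c)" "Measurable.pred M (\<lambda>\<omega>. B \<omega> = b)" for a b c
    using A B C by measurable
  show ab: "prob {\<omega>\<in>space M. A \<omega> = a \<and> B \<omega> = b} = (\<Sum>c\<in>UNIV. joint_prob3 M A B C a b c)" for a b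
    using prob_eq_sum_values[OF events(1) C] by (simp add: joint_prob3_def conj_ac)
  show "prob {\<omega>\<in>space M. A \<omega> = a \<and> C \<omega> = c} = (\<Sum>b\<in>UNIV. joint_prob3 M A B C a b c)"
    using prob_eq_sum_values[OF events(2) B] by (simp add: joint_prob3_def conj_ac)
  show "prob {\<omega>\<in>space M. B \<omega> = b \<and> C \<omega> = c} = (\<Sum>a\<in>UNIV. joint_prob3 M A B C a b c)"
    using prob_eq_sum_values[OF events(3) A] by (simp add: joint_prob3_def conj_ac)
  show "prob {\<omega>\<in>space M. B \<omega> = b} = (\<Sum>a\<in>UNIV. \<Sum>c\<in>UNIV. joint_prob3 M A B C a b c)"
    using prob_eq_sum_values[OF events(4) A] by (simp add: conj_ac flip: ab)
qed

lemma prob_vec_joint_prob3: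
  fixes A :: "'a \<Rightarrow> 'y::finite" and B :: "'a \<Rightarrow> 'b::finite" and C :: "'a \<Rightarrow> 'c::finite"
  assumes A: "A \<in> measurable M (count_space UNIV)" and B: "B \<in> measurable M (count_space UNIV)"
    and C: "C \<in> measurable M (count_space UNIV)"
  shows "prob_vec (\<lambda>(a, b, c). joint_prob3 M A B C a b c)"
proof -
  have "(\<Sum>a\<in>UNIV. \<Sum>b\<in>UNIV. \<Sum>c\<in>UNIV. joint_prob3 M A B C a b c)
          = (\<Sum>b\<in>UNIV. \<Sum>a\<in>UNIV. \<Sum>c\<in>UNIV. joint_prob3 M A B C a b c)"
    by (rule sum.swap)
  also have "\<dots> = prob {\<omega>\<in>space M. True}"
    using prob_eq_sum_values[of "\<lambda>_. True" B] B by (simp add: joint_prob3_marginals(4)[OF A B C])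
  finally show ?thesis
    by (simp add: prob_vec_def sum_UNIV_prod3 joint_prob3_def prob_space)
qed

lemma cond_mutual_info_eq_kl_div:
  fixes A :: "'a \<Rightarrow> 'y::finite" and B :: "'a \<Rightarrow> 'b::finite" and C :: "'a \<Rightarrow> 'c::finite"
  assumes A: "A \<in> measurable M (count_space UNIV)" and B: "B \<in> measurable M (count_space UNIV)"
    and C: "C \<in> measurable M (count_space UNIV)"
  shows "cond_mutual_info M A B C
           = kl_div (\<lambda>(a, b, c). joint_prob3 M A B C a b c)
               (\<lambda>(a, b, c). markov_approx (joint_prob3 M A B C) a b c)"
  unfolding cond_mutual_info_def kl_div_def markov_approx_def Let_def sum_UNIV_prod3
  by (simp only: joint_prob3_marginals[OF A B C] joint_prob3_def[symmetric] case_prod_conv)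

lemma cond_cross_entropy_L_le_of_approx_markov:
  fixes L :: "'y::finite \<Rightarrow> 'd \<Rightarrow> real" and Y :: "int \<Rightarrow> 'a \<Rightarrow> 'y" and X :: "int \<Rightarrow> 'a \<Rightarrow> 'x::finite"
    and Q Q' :: "'x \<Rightarrow> 'y \<Rightarrow> real"
  assumes L: "\<forall>y d. \<bar>L y d\<bar> \<le> B" and act: "is_bayes_selector L act"
    and Y: "Y t \<in> measurable M (count_space UNIV)"
    and X1: "X s\<^sub>1 \<in> measurable M (count_space UNIV)" and X2: "X s\<^sub>2 \<in> measurable M (count_space UNIV)"
    and mi: "cond_mutual_info M (Y t) (X s\<^sub>1) (X s\<^sub>2) \<le> \<epsilon>\<^sup>2" and \<epsilon>: "0 \<le> \<epsilon>"
    and Q: "\<forall>x. 0 < pX M X s\<^sub>1 x \<longrightarrow> prob_vec (Q x)"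
    and fit: "(\<Sum>x\<in>UNIV. pX M X s\<^sub>1 x * (\<Sum>y\<in>UNIV. (pYgX M Y X t s\<^sub>1 x y - Q x y)\<^sup>2)) \<le> \<beta>\<^sup>2"
    and \<beta>: "0 \<le> \<beta>"
  shows "cond_cross_entropy_L L act (pX M X s\<^sub>1) (pYgX M Y X t s\<^sub>1) Q
           \<le> cond_cross_entropy_L L act (pX M X s\<^sub>2) (pYgX M Y X t s\<^sub>2) Q'
             + 2 * B * \<epsilon> + 2 * B * sqrt CARD('y) * \<beta>"
proof -
  define p where "p = joint_prob3 M (Y t) (X s\<^sub>1) (X s\<^sub>2)"
  have J1: "pYX M Y X t s\<^sub>1 y b = (\<Sum>c\<in>UNIV. p y b c)" for y b
    using joint_prob3_marginals(1)[OF Y X1 X2] by (simp add: pYX_def p_def)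
  have J2: "pYX M Y X t s\<^sub>2 y c = (\<Sum>b\<in>UNIV. p y b c)" for y c
    using joint_prob3_marginals(2)[OF Y X1 X2] by (simp add: pYX_def p_def)
  have pX1: "pX M X s\<^sub>1 b = (\<Sum>y\<in>UNIV. \<Sum>c\<in>UNIV. p y b c)" for b
    using pX_eq_sum_pYX[where Y=Y and t=t and X=X and s=s\<^sub>1, OF Y X1] by (simp add: J1)
  have dev: "(\<Sum>b\<in>UNIV. (\<Sum>y\<in>UNIV. \<Sum>c\<in>UNIV. p y b c)
                   * (\<Sum>y\<in>UNIV. \<bar>(\<Sum>c\<in>UNIV. p y b c) / (\<Sum>y\<in>UNIV. \<Sum>c\<in>UNIV. p y b c) - Q b y\<bar>))
                 \<le> sqrt CARD('y) * \<beta>"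
    using plugin_error_l1_le[OF X1 fit \<beta>] by (simp add: pYgX_def pX1 J1)
  have "0 \<le> B"
    using L abs_ge_zero order_trans by blast
  moreover have "(\<Sum>b\<in>UNIV. \<Sum>y\<in>UNIV. (\<Sum>c\<in>UNIV. p y b c) * L y (act (Q b)))
          \<le> (\<Sum>c\<in>UNIV. \<Sum>y\<in>UNIV. (\<Sum>b\<in>UNIV. p y b c) * L y (act (Q' c))) + 2 * B * \<epsilon>
             + 2 * B * (\<Sum>b\<in>UNIV. (\<Sum>y\<in>UNIV. \<Sum>c\<in>UNIV. p y b c)
                 * (\<Sum>y\<in>UNIV. \<bar>(\<Sum>c\<in>UNIV. p y b c) / (\<Sum>y\<in>UNIV. \<Sum>c\<in>UNIV. p y b c) - Q b y\<bar>))"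
  proof (rule plugin_risk_le_risk_of_approx_markov[OF L act _ _ _ \<epsilon>])
    show "prob_vec (\<lambda>(y, b, c). p y b c)"
      unfolding p_def by (rule prob_vec_joint_prob3[OF Y X1 X2])
    show "\<forall>b. 0 < (\<Sum>y\<in>UNIV. \<Sum>c\<in>UNIV. p y b c) \<longrightarrow> prob_vec (Q b)"
      using Q by (simp add: pX1)
    show "kl_div (\<lambda>(y, b, c). p y b c) (\<lambda>(y, b, c). markov_approx p y b c) \<le> \<epsilon>\<^sup>2"
      using mi by (simp add: cond_mutual_info_eq_kl_div[OF Y X1 X2] p_def)
  qed
  ultimately show ?thesis
    unfolding cond_cross_entropy_L_process_eq_joint_risk[where Y=Y and t=t and X=X and s=s\<^sub>1, OF Y X1]
      cond_cross_entropy_L_process_eq_joint_risk[where Y=Y and t=t and X=X and s=s\<^sub>2, OF Y X2] J1 J2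
    using mult_left_mono[OF dev, of "2 * B"] by simp
qed

end

theorem theorem3:
  fixes L :: "'y::finite \<Rightarrow> 'a \<Rightarrow> real"
  assumes "\<exists>B. \<forall>y a. \<bar>L y a\<bar> \<le> B"
  shows "\<exists>C. \<forall>(M::'w measure) (Y::int \<Rightarrow> 'w \<Rightarrow> 'y) (X::int \<Rightarrow> 'w \<Rightarrow> 'x::finite)
            (T::nat \<Rightarrow> ('y \<times> 'x) pmf) (act::('y \<Rightarrow> real) \<Rightarrow> 'a)
            (\<beta>::real) (\<epsilon>::real) (t::int) (\<delta>\<^sub>1::nat) (\<delta>\<^sub>2::nat).
     prob_space M \<and>
     (\<forall>s. Y s \<in> measurable M (count_space UNIV) \<and> X s \<in> measurable M (count_space UNIV)) \<and>
     stationary M Y X \<and>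
     is_bayes_selector L act \<and>
     0 \<le> \<beta> \<and> 0 \<le> \<epsilon> \<and>
     (\<forall>\<mu> \<nu>::nat. cond_mutual_info M (Y t) (X (t - int \<mu>)) (X (t - int \<mu> - int \<nu>)) \<le> \<epsilon>\<^sup>2) \<and>
     (\<forall>(\<delta>::nat) x. pX M X (t - int \<delta>) x > 0 \<longrightarrow> train_pX (T \<delta>) x > 0) \<and>
     (\<forall>\<delta>::nat. (\<Sum>x\<in>UNIV. pX M X (t - int \<delta>) x *
                 (\<Sum>y\<in>UNIV. (pYgX M Y X t (t - int \<delta>) x y - train_pYgX (T \<delta>) x y)\<^sup>2)) \<le> \<beta>\<^sup>2) \<and>
     \<delta>\<^sub>1 \<le> \<delta>\<^sub>2
     \<longrightarrow>
     cond_cross_entropy_L L act (pX M X (t - int \<delta>\<^sub>1)) (pYgX M Y X t (t - int \<delta>\<^sub>1)) (train_pYgX (T \<delta>\<^sub>1))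
       \<le> cond_cross_entropy_L L act (pX M X (t - int \<delta>\<^sub>2)) (pYgX M Y X t (t - int \<delta>\<^sub>2)) (train_pYgX (T \<delta>\<^sub>2))
         + C * max \<epsilon> \<beta>"
proof -
  obtain B where L: "\<forall>y a. \<bar>L y a\<bar> \<le> B"
    using assms by blast
  then have "0 \<le> B"
    using abs_ge_zero order_trans by blast
  then have slack: "2 * B * \<epsilon> + 2 * B * sqrt CARD('y) * \<beta> \<le> (2 * B + 2 * B * sqrt CARD('y)) * max \<epsilon> \<beta>"
    for \<epsilon> \<beta> :: real
    using mult_left_mono[of \<epsilon> "max \<epsilon> \<beta>" "2 * B"] mult_left_mono[of \<beta> "max \<epsilon> \<beta>" "2 * B * sqrt CARD('y)"]
    by (simp add: distrib_right)
  show ?thesis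
  proof (intro exI[of _ "2 * B + 2 * B * sqrt CARD('y)"] allI impI, elim conjE)
    fix M :: "'w measure" and Y :: "int \<Rightarrow> 'w \<Rightarrow> 'y" and X :: "int \<Rightarrow> 'w \<Rightarrow> 'x"
      and T :: "nat \<Rightarrow> ('y \<times> 'x) pmf" and act :: "('y \<Rightarrow> real) \<Rightarrow> 'a"
      and \<beta> \<epsilon> :: real and t :: int and \<delta>\<^sub>1 \<delta>\<^sub>2 :: nat
    assume M: "prob_space M"
      and meas: "\<forall>s. Y s \<in> measurable M (count_space UNIV) \<and> X s \<in> measurable M (count_space UNIV)"
      and act: "is_bayes_selector L act" and \<beta>: "0 \<le> \<beta>" and \<epsilon>: "0 \<le> \<epsilon>"
      and mi: "\<forall>\<mu> \<nu>::nat. cond_mutual_info M (Y t) (X (t - int \<mu>)) (X (t - int \<mu> - int \<nu>)) \<le> \<epsilon>\<^sup>2"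
      and pos: "\<forall>(\<delta>::nat) x. pX M X (t - int \<delta>) x > 0 \<longrightarrow> train_pX (T \<delta>) x > 0"
      and fit: "\<forall>\<delta>::nat. (\<Sum>x\<in>UNIV. pX M X (t - int \<delta>) x *
                 (\<Sum>y\<in>UNIV. (pYgX M Y X t (t - int \<delta>) x y - train_pYgX (T \<delta>) x y)\<^sup>2)) \<le> \<beta>\<^sup>2"
      and "\<delta>\<^sub>1 \<le> \<delta>\<^sub>2"
    have "cond_mutual_info M (Y t) (X (t - int \<delta>\<^sub>1)) (X (t - int \<delta>\<^sub>2)) \<le> \<epsilon>\<^sup>2"
      using mi[rule_format, of \<delta>\<^sub>1 "\<delta>\<^sub>2 - \<delta>\<^sub>1"] \<open>\<delta>\<^sub>1 \<le> \<delta>\<^sub>2\<close> by (simp add: of_nat_diff)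
    then have "cond_cross_entropy_L L act (pX M X (t - int \<delta>\<^sub>1)) (pYgX M Y X t (t - int \<delta>\<^sub>1)) (train_pYgX (T \<delta>\<^sub>1))
        \<le> cond_cross_entropy_L L act (pX M X (t - int \<delta>\<^sub>2)) (pYgX M Y X t (t - int \<delta>\<^sub>2)) (train_pYgX (T \<delta>\<^sub>2))
          + 2 * B * \<epsilon> + 2 * B * sqrt CARD('y) * \<beta>"
      (is "?H\<^sub>1 \<le> ?H\<^sub>2 + _ + _")
      using meas pos fit \<epsilon> \<beta>
      by (intro prob_space.cond_cross_entropy_L_le_of_approx_markov[OF M L act])
        (auto intro: prob_vec_train_pYgX)
    then show "?H\<^sub>1 \<le> ?H\<^sub>2 + (2 * B + 2 * B * sqrt CARD('y)) * max \<epsilon> \<beta>"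
      using slack[of \<epsilon> \<beta>] by linarith
  qed
qed

end
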